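(* Let $u:\mathbb{R}^n\to\mathbb{R}$ be a smooth function and let $M$ be its (entire) graph in $\mathbb{R}^{n+1}$. Assume its mean curvature $H=-\operatorname{div}\big(Du/\sqrt{1+|Du|^2}\big)$ is non-positive on $\mathbb{R}^n$. Then there is a constant $C>0$ such that $\operatorname{vol}(B_R\cap M)\le CR^n$, where $B_R=\{X\in\mathbb{R}^{n+1}:|X|<R\}$. Furthermore, if such a graph $M$ is a translating soliton, i.e. $H=\langle\nu,a\rangle$ for a fixed unit vector $a\in\mathbb{R}^{n+1}$ with $\nu=(-Du,1)/\sqrt{1+|Du|^2}$, then, with $S(X)=\langle X,a\rangle$ on $M$, either $\inf_M S=-\infty$ or $\sup_M S=\infty$.
   Context: Volume on $M$ is the induced $n$-dimensional Riemannian volume; $Du$ is the Euclidean gradient of $u$. *)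

theory Defs
  imports "HOL-Analysis.Analysis"
begin

fun C_k :: "nat \<Rightarrow> ('a::euclidean_space \<Rightarrow> real) \<Rightarrow> bool" where
  "C_k 0 f = continuous_on UNIV f"
| "C_k (Suc k) f = (f differentiable_on UNIV \<and> continuous_on UNIV f \<and>
      (\<forall>i\<in>Basis. C_k k (\<lambda>x. frechet_derivative f (at x) i)))"

definition smooth_fun :: "('a::euclidean_space \<Rightarrow> real) \<Rightarrow> bool" where
  "smooth_fun f \<longleftrightarrow> (\<forall>k. C_k k f)"

definition grad :: "('a::euclidean_space \<Rightarrow> real) \<Rightarrow> 'a \<Rightarrow> 'a" where
  "grad u x = (\<Sum>i\<in>Basis. frechet_derivative u (at x) i *\<^sub>R i)"

definition divergence :: "('a::euclidean_space \<Rightarrow> 'a) \<Rightarrow> 'a \<Rightarrow> real" where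
  "divergence F x = (\<Sum>i\<in>Basis. frechet_derivative F (at x) i \<bullet> i)"

definition mean_curv :: "('a::euclidean_space \<Rightarrow> real) \<Rightarrow> 'a \<Rightarrow> real" where
  "mean_curv u x = - divergence (\<lambda>y. (1 / sqrt (1 + (norm (grad u y))\<^sup>2)) *\<^sub>R grad u y) x"

definition graph_normal :: "('a::euclidean_space \<Rightarrow> real) \<Rightarrow> 'a \<Rightarrow> 'a \<times> real" where
  "graph_normal u x = (1 / sqrt (1 + (norm (grad u x))\<^sup>2)) *\<^sub>R (- grad u x, 1)"

definition graph :: "('a::euclidean_space \<Rightarrow> real) \<Rightarrow> ('a \<times> real) set" where
  "graph u = {(x, u x) | x. True}"

text \<open>Induced n-dimensional Riemannian volume of (graph u) \<inter> A, via the area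
  formula for graphs: integral over {x. (x,u x) \<in> A} of sqrt(1+|Du|^2).\<close>
definition graph_vol :: "('a::euclidean_space \<Rightarrow> real) \<Rightarrow> ('a \<times> real) set \<Rightarrow> ennreal" where
  "graph_vol u A = (\<integral>\<^sup>+ x. indicator {x. (x, u x) \<in> A} x * ennreal (sqrt (1 + (norm (grad u x))\<^sup>2)) \<partial>lborel)"

end

theory Submission
  imports Defs
begin

text \<open>Let \<open>W = \<surd>(1 + |Du|\<^sup>2)\<close> and \<open>X = Du/W\<close>, so that \<open>|X| \<le> 1\<close> and \<open>div X = -H \<ge> 0\<close>.
  A bounded \<open>C\<^sup>1\<close> field has flux \<open>O(R\<^sup>n\<^sup>-\<^sup>1)\<close> through the cube \<open>[-R, R]\<^sup>n\<close>. For the volume bound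
  take \<open>\<psi>(u) X\<close> with \<open>\<psi>\<close> an arctan cutoff bounded by \<open>\<pi>R\<close>: its divergence is nonnegative and
  dominates \<open>(W - 1)/2\<close> wherever \<open>|u| < R\<close>, so the area of the part of the graph inside \<open>B\<^sub>R\<close> is
  \<open>O(R\<^sup>n)\<close>. For a translator with \<open>a = (b, c)\<close> the height \<open>S = \<langle>(x, u), a\<rangle>\<close> satisfies
  \<open>DS(X) = div X + c W\<close>; if \<open>S\<close> were bounded, a field \<open>(\<plusminus>S + const) X\<close> would be bounded with
  divergence at least \<open>|c|\<close>, forcing \<open>c = 0\<close>, and then \<open>S = \<langle>x, b\<rangle>\<close> is unbounded.\<close>

section \<open>Continuously differentiable maps\<close>

definition C1 :: "('a::real_normed_vector \<Rightarrow> 'b::real_normed_vector) \<Rightarrow> ('a \<Rightarrow> 'a \<Rightarrow> 'b) \<Rightarrow> bool" where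
  "C1 f f' \<longleftrightarrow> (\<forall>x. (f has_derivative f' x) (at x)) \<and> (\<forall>h. continuous_on UNIV (\<lambda>x. f' x h))"

lemma C1I:
  "(\<And>x. (f has_derivative f' x) (at x)) \<Longrightarrow> (\<And>h. continuous_on UNIV (\<lambda>x. f' x h)) \<Longrightarrow> C1 f f'"
  unfolding C1_def by blast

lemma C1_has_derivative: "C1 f f' \<Longrightarrow> (f has_derivative f' x) (at x)"
  unfolding C1_def by blast

lemma C1_continuous_derivative: "C1 f f' \<Longrightarrow> continuous_on UNIV (\<lambda>x. f' x h)"
  unfolding C1_def by blast

lemma C1_continuous: "C1 f f' \<Longrightarrow> continuous_on UNIV f"
  unfolding C1_def by (meson continuous_at_imp_continuous_on has_derivative_continuous)

lemma C1_const: "C1 (\<lambda>x. c) (\<lambda>x h. 0)"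
  by (rule C1I) (auto intro: derivative_eq_intros continuous_intros)

lemma C1_inner_const: "C1 (\<lambda>x. x \<bullet> c) (\<lambda>x h. h \<bullet> c)"
  by (rule C1I)
    (auto intro: bounded_linear.has_derivative[OF bounded_linear_inner_left] has_derivative_ident
      continuous_intros)

lemma C1_add:
  assumes f: "C1 f f'" and g: "C1 g g'"
  shows "C1 (\<lambda>x. f x + g x) (\<lambda>x h. f' x h + g' x h)"
proof (rule C1I)
  show "((\<lambda>x. f x + g x) has_derivative (\<lambda>h. f' x h + g' x h)) (at x)" for x
    by (rule has_derivative_add[OF C1_has_derivative[OF f] C1_has_derivative[OF g]])
  show "continuous_on UNIV (\<lambda>x. f' x h + g' x h)" for h
    by (intro continuous_intros C1_continuous_derivative[OF f] C1_continuous_derivative[OF g])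
qed

lemma C1_sum:
  assumes "finite I" "\<And>i. i \<in> I \<Longrightarrow> C1 (f i) (f' i)"
  shows "C1 (\<lambda>x. \<Sum>i\<in>I. f i x) (\<lambda>x h. \<Sum>i\<in>I. f' i x h)"
proof (rule C1I)
  show "((\<lambda>x. \<Sum>i\<in>I. f i x) has_derivative (\<lambda>h. \<Sum>i\<in>I. f' i x h)) (at x)" for x
    by (rule has_derivative_sum) (use assms C1_has_derivative in blast)
  show "continuous_on UNIV (\<lambda>x. \<Sum>i\<in>I. f' i x h)" for h
    by (rule continuous_on_sum) (use assms C1_continuous_derivative in blast)
qed

lemma C1_scaleR:
  fixes f :: "'a::real_normed_vector \<Rightarrow> real" and g :: "'a \<Rightarrow> 'b::real_normed_vector"
  assumes f: "C1 f f'" and g: "C1 g g'"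
  shows "C1 (\<lambda>x. f x *\<^sub>R g x) (\<lambda>x h. f x *\<^sub>R g' x h + f' x h *\<^sub>R g x)"
proof (rule C1I)
  show "((\<lambda>x. f x *\<^sub>R g x) has_derivative (\<lambda>h. f x *\<^sub>R g' x h + f' x h *\<^sub>R g x)) (at x)" for x
    by (rule has_derivative_scaleR[OF C1_has_derivative[OF f] C1_has_derivative[OF g]])
  show "continuous_on UNIV (\<lambda>x. f x *\<^sub>R g' x h + f' x h *\<^sub>R g x)" for h
    by (intro continuous_intros C1_continuous[OF f] C1_continuous[OF g]
        C1_continuous_derivative[OF f] C1_continuous_derivative[OF g])
qed

lemma C1_scaleR_const:
  fixes f :: "'a::real_normed_vector \<Rightarrow> real"
  assumes "C1 f f'"
  shows "C1 (\<lambda>x. f x *\<^sub>R c) (\<lambda>x h. f' x h *\<^sub>R c)"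
  using C1_scaleR[OF assms C1_const[of c]] by simp

lemma C1_inner:
  fixes f g :: "'a::real_normed_vector \<Rightarrow> 'b::real_inner"
  assumes f: "C1 f f'" and g: "C1 g g'"
  shows "C1 (\<lambda>x. f x \<bullet> g x) (\<lambda>x h. f x \<bullet> g' x h + f' x h \<bullet> g x)"
proof (rule C1I)
  show "((\<lambda>x. f x \<bullet> g x) has_derivative (\<lambda>h. f x \<bullet> g' x h + f' x h \<bullet> g x)) (at x)" for x
    by (rule has_derivative_inner[OF C1_has_derivative[OF f] C1_has_derivative[OF g]])
  show "continuous_on UNIV (\<lambda>x. f x \<bullet> g' x h + f' x h \<bullet> g x)" for h
    by (intro continuous_intros C1_continuous[OF f] C1_continuous[OF g]
        C1_continuous_derivative[OF f] C1_continuous_derivative[OF g])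
qed

lemma C1_compose_real:
  fixes f :: "'a::real_normed_vector \<Rightarrow> real"
  assumes f: "C1 f f'"
    and \<phi>: "\<And>x. (\<phi> has_real_derivative \<phi>' (f x)) (at (f x))"
    and \<phi>'_cont: "continuous_on UNIV (\<lambda>x. \<phi>' (f x))"
  shows "C1 (\<lambda>x. \<phi> (f x)) (\<lambda>x h. \<phi>' (f x) * f' x h)"
proof (rule C1I)
  show "((\<lambda>x. \<phi> (f x)) has_derivative (\<lambda>h. \<phi>' (f x) * f' x h)) (at x)" for x
    using has_derivative_compose[OF C1_has_derivative[OF f] \<phi>[of x, unfolded has_field_derivative_def]] .
  show "continuous_on UNIV (\<lambda>x. \<phi>' (f x) * f' x h)" for h
    by (intro continuous_intros C1_continuous_derivative[OF f] \<phi>'_cont)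
qed

lemma linear_eq_sum_Basis:
  fixes L :: "'a::euclidean_space \<Rightarrow> real"
  assumes "linear L"
  shows "L h = (\<Sum>j\<in>Basis. (h \<bullet> j) * L j)"
  using Linear_Algebra.linear_componentwise[OF assms, of h 1] by simp

lemma C1_frechet_derivative:
  fixes f :: "'a::euclidean_space \<Rightarrow> real"
  assumes f: "f differentiable_on UNIV"
    and partials: "\<And>j. j \<in> Basis \<Longrightarrow> continuous_on UNIV (\<lambda>x. frechet_derivative f (at x) j)"
  shows "C1 f (\<lambda>x. frechet_derivative f (at x))"
proof (rule C1I)
  show Df: "(f has_derivative frechet_derivative f (at x)) (at x)" for x
    using f frechet_derivative_works unfolding differentiable_on_def by auto
  show "continuous_on UNIV (\<lambda>x. frechet_derivative f (at x) h)" for h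
  proof -
    have "(\<lambda>x. frechet_derivative f (at x) h)
        = (\<lambda>x. \<Sum>j\<in>Basis. (h \<bullet> j) * frechet_derivative f (at x) j)"
      by (rule ext, rule linear_eq_sum_Basis, rule has_derivative_linear[OF Df])
    then show ?thesis
      by (simp only:) (intro continuous_on_sum continuous_intros partials)
  qed
qed

lemma divergence_C1:
  assumes "C1 F F'"
  shows "divergence F x = (\<Sum>i\<in>Basis. F' x i \<bullet> i)"
  unfolding divergence_def frechet_derivative_at[OF C1_has_derivative[OF assms]] ..

lemma continuous_on_divergence:
  assumes "C1 F F'"
  shows "continuous_on UNIV (divergence F)"
  unfolding divergence_C1[OF assms, abs_def]
  by (intro continuous_on_sum continuous_intros C1_continuous_derivative[OF assms])

lemma divergence_scaleR:
  fixes \<psi> :: "'a::euclidean_space \<Rightarrow> real"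
  assumes \<psi>: "C1 \<psi> \<psi>'" and X: "C1 X X'"
  shows "divergence (\<lambda>x. \<psi> x *\<^sub>R X x) x = \<psi>' x (X x) + \<psi> x * divergence X x"
proof -
  have "\<psi>' x (X x) = (\<Sum>j\<in>Basis. (X x \<bullet> j) * \<psi>' x j)"
    by (rule linear_eq_sum_Basis[OF has_derivative_linear[OF C1_has_derivative[OF \<psi>]]])
  then show ?thesis
    unfolding divergence_C1[OF C1_scaleR[OF \<psi> X]] divergence_C1[OF X]
    by (simp add: inner_add_left sum.distrib sum_distrib_left mult.commute)
qed

section \<open>Integrals over cubes\<close>

abbreviation cube :: "real \<Rightarrow> 'a::euclidean_space set" where
  "cube R \<equiv> cbox (- (R *\<^sub>R One)) (R *\<^sub>R One)"

definition stretched_cube :: "real \<Rightarrow> real \<Rightarrow> real \<Rightarrow> 'a::euclidean_space \<Rightarrow> 'a set" where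
  "stretched_cube R s t i = cbox (- (R *\<^sub>R One) + s *\<^sub>R i) (R *\<^sub>R One + t *\<^sub>R i)"

lemma stretched_cube_0_0: "stretched_cube R 0 0 i = cube R"
  by (simp add: stretched_cube_def)

lemma inner_stretched_cube_corners:
  fixes i j :: "'a::euclidean_space"
  assumes "j \<in> Basis"
  shows "(- (R *\<^sub>R One) + s *\<^sub>R i) \<bullet> j = - R + s * (i \<bullet> j)"
    and "(R *\<^sub>R One + s *\<^sub>R i) \<bullet> j = R + s * (i \<bullet> j)"
    and "(s *\<^sub>R i - R *\<^sub>R One) \<bullet> j = s * (i \<bullet> j) - R"
  using assms by (simp_all add: inner_add_left inner_diff_left inner_minus_left inner_sum_Basis)

lemma mem_stretched_cube:
  assumes i: "i \<in> Basis"
  shows "x \<in> stretched_cube R s t i \<longleftrightarrow>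
    (\<forall>j\<in>Basis. j \<noteq> i \<longrightarrow> - R \<le> x \<bullet> j \<and> x \<bullet> j \<le> R) \<and> - R + s \<le> x \<bullet> i \<and> x \<bullet> i \<le> R + t"
proof -
  have "x \<in> stretched_cube R s t i \<longleftrightarrow>
      (\<forall>j\<in>Basis. - R + s * (i \<bullet> j) \<le> x \<bullet> j \<and> x \<bullet> j \<le> R + t * (i \<bullet> j))"
    unfolding stretched_cube_def mem_box by (simp add: inner_stretched_cube_corners)
  also have "\<dots> \<longleftrightarrow>
      (\<forall>j\<in>Basis. j \<noteq> i \<longrightarrow> - R \<le> x \<bullet> j \<and> x \<bullet> j \<le> R) \<and> - R + s \<le> x \<bullet> i \<and> x \<bullet> i \<le> R + t"
    using i by (auto simp: inner_Basis)
  finally show ?thesis .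
qed

lemma content_stretched_cube:
  fixes i :: "'a::euclidean_space"
  assumes i: "i \<in> Basis" and "R \<ge> 0" and "0 \<le> 2 * R + t - s"
  shows "Henstock_Kurzweil_Integration.content (stretched_cube R s t i) = (2 * R + t - s) * (2 * R) ^ (DIM('a) - 1)"
proof -
  have "- (R *\<^sub>R One) + s *\<^sub>R i \<in> stretched_cube R s t i"
    using assms by (auto simp: mem_stretched_cube inner_stretched_cube_corners inner_Basis)
  then have "Henstock_Kurzweil_Integration.content (stretched_cube R s t i)
      = (\<Prod>j\<in>Basis. (R *\<^sub>R One + t *\<^sub>R i) \<bullet> j - (- (R *\<^sub>R One) + s *\<^sub>R i) \<bullet> j)"
    unfolding stretched_cube_def by (auto simp: content_cbox_if)
  also have "\<dots> = (\<Prod>j\<in>Basis. 2 * R + (t - s) * (i \<bullet> j))"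
    by (rule prod.cong) (auto simp: inner_stretched_cube_corners algebra_simps)
  also have "\<dots> = (2 * R + (t - s) * (i \<bullet> i)) * (\<Prod>j\<in>Basis - {i}. 2 * R + (t - s) * (i \<bullet> j))"
    using i by (simp add: prod.remove)
  also have "(\<Prod>j\<in>Basis - {i}. 2 * R + (t - s) * (i \<bullet> j)) = (\<Prod>j\<in>Basis - {i}. 2 * R)"
    by (rule prod.cong) (use i in \<open>auto simp: inner_Basis\<close>)
  finally show ?thesis
    using i by (simp add: card_Diff_singleton inner_Basis)
qed

lemma mult_power_DIM_minus_1: "(x::real) * x ^ (DIM('a::euclidean_space) - 1) = x ^ DIM('a)"
proof -
  have "Suc (DIM('a) - 1) = DIM('a)"
    using DIM_positive[where 'a='a] by arith
  then show ?thesis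
    using power_Suc[of x "DIM('a) - 1"] by simp
qed

lemma integral_cube_const:
  assumes "R \<ge> 0"
  shows "integral (cube R :: 'a::euclidean_space set) (\<lambda>x. c) = c * (2 * R) ^ DIM('a)"
proof -
  obtain i :: 'a where "i \<in> Basis"
    using nonempty_Basis by blast
  from content_stretched_cube[OF this assms, of 0 0] assms
  have "Henstock_Kurzweil_Integration.content (cube R :: 'a set) = (2 * R) ^ DIM('a)"
    by (simp only: stretched_cube_0_0 diff_zero add_0_right mult_power_DIM_minus_1)
  then show ?thesis
    by simp
qed

lemma integrable_cbox_if_continuous_on_UNIV:
  "continuous_on UNIV (f :: 'a::euclidean_space \<Rightarrow> real) \<Longrightarrow> f integrable_on cbox a b"
  by (rule integrable_continuous, rule continuous_on_subset) auto

lemma abs_integral_stretched_cube_le: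
  fixes G :: "'a::euclidean_space \<Rightarrow> real"
  assumes "continuous_on UNIV G" and "\<And>x. \<bar>G x\<bar> \<le> B"
  shows "\<bar>integral (stretched_cube R s t i) G\<bar> \<le> B * Henstock_Kurzweil_Integration.content (stretched_cube R s t i)"
proof -
  have "0 \<le> B"
    using assms(2)[of 0] by linarith
  then show ?thesis
    unfolding stretched_cube_def
    using has_integral_bound[OF _ integrable_integral[OF integrable_cbox_if_continuous_on_UNIV[OF assms(1)]]]
      assms(2) by auto
qed

lemma integral_cube_translate:
  fixes G :: "'a::euclidean_space \<Rightarrow> real"
  assumes "continuous_on UNIV G"
  shows "integral (cube R) (\<lambda>x. G (x + h *\<^sub>R i)) = integral (stretched_cube R h h i) G"
proof -
  have "((G \<circ> (+) (h *\<^sub>R i)) has_integral integral (stretched_cube R h h i) G) (cube R)"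
    unfolding has_integral_shift_cbox_iff stretched_cube_def
    by (rule integrable_integral, rule integrable_cbox_if_continuous_on_UNIV[OF assms])
  then show ?thesis
    by (simp add: o_def add.commute integral_unique stretched_cube_0_0)
qed

text \<open>Translating the cube by \<open>h\<close> along \<open>i\<close> trades a slab of width \<open>h\<close> for another one.\<close>
lemma integral_cube_translate_diff_le:
  fixes G :: "'a::euclidean_space \<Rightarrow> real"
  assumes i: "i \<in> Basis" and G: "continuous_on UNIV G" and bound: "\<And>x. \<bar>G x\<bar> \<le> B"
    and h: "0 < h" "h \<le> R"
  shows "integral (cube R) (\<lambda>x. G (x + h *\<^sub>R i)) - integral (cube R) G
      \<le> 2 * B * h * (2 * R) ^ (DIM('a) - 1)"
proof -
  let ?I = "\<lambda>s t. integral (stretched_cube R s t i) G"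
  have split: "?I s t = integral (stretched_cube R s t i \<inter> {x. x \<bullet> i \<le> c}) G
                     + integral (stretched_cube R s t i \<inter> {x. c \<le> x \<bullet> i}) G" for s t c
    unfolding stretched_cube_def
    by (rule integral_split[OF integrable_cbox_if_continuous_on_UNIV[OF G] i])
  have "stretched_cube R h h i \<inter> {x. x \<bullet> i \<le> R} = stretched_cube R h 0 i"
    "stretched_cube R h h i \<inter> {x. R \<le> x \<bullet> i} = stretched_cube R (2 * R) h i"
    "stretched_cube R 0 0 i \<inter> {x. x \<bullet> i \<le> - R + h} = stretched_cube R 0 (h - 2 * R) i"
    "stretched_cube R 0 0 i \<inter> {x. - R + h \<le> x \<bullet> i} = stretched_cube R h 0 i"
    using i h by (auto simp: mem_stretched_cube)
  then have upper: "?I h h = ?I h 0 + ?I (2 * R) h"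
    and lower: "integral (cube R) G = ?I 0 (h - 2 * R) + ?I h 0"
    using split[of h h R] split[of 0 0 "- R + h"] by (simp_all add: stretched_cube_0_0)
  have "\<bar>?I (2 * R) h\<bar> \<le> B * (h * (2 * R) ^ (DIM('a) - 1))"
    using abs_integral_stretched_cube_le[OF G bound, of R "2 * R" h i]
      content_stretched_cube[OF i, of R h "2 * R"] h by simp
  moreover have "\<bar>?I 0 (h - 2 * R)\<bar> \<le> B * (h * (2 * R) ^ (DIM('a) - 1))"
    using abs_integral_stretched_cube_le[OF G bound, of R 0 "h - 2 * R" i]
      content_stretched_cube[OF i, of R "h - 2 * R" 0] h by simp
  ultimately show ?thesis
    using upper lower unfolding integral_cube_translate[OF G]
    by (simp add: algebra_simps)
qed

section \<open>Flux of bounded vector fields\<close>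

lemma uniform_difference_quotient:
  fixes G g :: "'a::euclidean_space \<Rightarrow> real"
  assumes i: "i \<in> Basis" and R: "R > 0" and g: "continuous_on UNIV g"
    and G': "\<And>x. ((\<lambda>s. G (x + s *\<^sub>R i)) has_real_derivative g x) (at 0)"
    and e: "e > 0"
  obtains h where "0 < h" "h \<le> R"
    "\<And>x. x \<in> cube R \<Longrightarrow> \<bar>(G (x + h *\<^sub>R i) - G x) / h - g x\<bar> \<le> e"
proof -
  have "uniformly_continuous_on (cube (2 * R)) g"
    by (rule compact_uniformly_continuous[OF continuous_on_subset[OF g] compact_cbox]) auto
  then obtain d where d: "d > 0"
    and close: "\<And>x x'. x \<in> cube (2 * R) \<Longrightarrow> x' \<in> cube (2 * R) \<Longrightarrow> dist x' x < d
      \<Longrightarrow> dist (g x') (g x) < e"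
    using e unfolding uniformly_continuous_on_def by metis
  define h where "h = min R (d / 2)"
  have h: "0 < h" "h \<le> R" "h < d"
    using R d by (auto simp: h_def)
  have "\<bar>(G (x + h *\<^sub>R i) - G x) / h - g x\<bar> \<le> e" if x: "x \<in> cube R" for x
  proof -
    have "((\<lambda>s. G (x + s *\<^sub>R i)) has_real_derivative g (x + s *\<^sub>R i)) (at s)" for s
      using DERIV_shift[of "\<lambda>s. G (x + s *\<^sub>R i)" "g (x + s *\<^sub>R i)" 0 s] G'[of "x + s *\<^sub>R i"]
      by (simp add: algebra_simps)
    then obtain z where z: "0 < z" "z < h"
      and mvt: "G (x + h *\<^sub>R i) - G (x + 0 *\<^sub>R i) = (h - 0) * g (x + z *\<^sub>R i)"
      using MVT2[OF h(1), of "\<lambda>s. G (x + s *\<^sub>R i)" "\<lambda>s. g (x + s *\<^sub>R i)"] by blast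
    have "x \<in> cube (2 * R)" "x + z *\<^sub>R i \<in> cube (2 * R)"
      using x i R z h by (auto simp: mem_box inner_add_left inner_Basis abs_le_iff)
    moreover have "dist (x + z *\<^sub>R i) x < d"
      using z h i by (simp add: dist_norm)
    ultimately have "\<bar>g (x + z *\<^sub>R i) - g x\<bar> < e"
      using close by (simp add: dist_real_def)
    then show ?thesis
      using mvt h by simp
  qed
  then show ?thesis
    using that h by blast
qed

text \<open>A one-dimensional divergence theorem on cubes, obtained from difference quotients and
  translation rather than from Fubini and the fundamental theorem of calculus.\<close>
lemma integral_cube_partial_derivative_le:
  fixes G g :: "'a::euclidean_space \<Rightarrow> real"
  assumes i: "i \<in> Basis" and R: "R > 0"
    and G: "continuous_on UNIV G" and g: "continuous_on UNIV g"
    and G': "\<And>x. ((\<lambda>s. G (x + s *\<^sub>R i)) has_real_derivative g x) (at 0)"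
    and bound: "\<And>x. \<bar>G x\<bar> \<le> B"
  shows "integral (cube R) g \<le> 2 * B * (2 * R) ^ (DIM('a) - 1)"
proof (rule field_le_epsilon)
  fix \<epsilon> :: real
  assume "\<epsilon> > 0"
  define e where "e = \<epsilon> / (2 * R) ^ DIM('a)"
  have "e > 0"
    using \<open>\<epsilon> > 0\<close> R by (simp add: e_def)
  then obtain h where h: "0 < h" "h \<le> R"
    and quotient: "\<And>x. x \<in> cube R \<Longrightarrow> \<bar>(G (x + h *\<^sub>R i) - G x) / h - g x\<bar> \<le> e"
    using uniform_difference_quotient[OF i R g G'] by blast
  have Gh: "continuous_on UNIV (\<lambda>x. G (x + h *\<^sub>R i))"
    by (intro continuous_on_compose2[OF G] continuous_intros) auto
  note integrable = integrable_cbox_if_continuous_on_UNIV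
  have "integral (cube R) g \<le> integral (cube R) (\<lambda>x. (G (x + h *\<^sub>R i) - G x) / h + e)"
  proof (intro integral_le integrable continuous_intros Gh G g)
    show "g x \<le> (G (x + h *\<^sub>R i) - G x) / h + e" if "x \<in> cube R" for x
      using quotient[OF that] by linarith
  qed (use h in auto)
  also have "\<dots> = integral (cube R) (\<lambda>x. (G (x + h *\<^sub>R i) - G x) / h) + integral (cube R) (\<lambda>x::'a. e)"
    by (rule Henstock_Kurzweil_Integration.integral_add) (use h in \<open>auto intro!: integrable continuous_intros Gh G\<close>)
  also have "\<dots> = (integral (cube R) (\<lambda>x. G (x + h *\<^sub>R i)) - integral (cube R) G) / h
      + e * (2 * R) ^ DIM('a)"
    using R unfolding integral_divide integral_cube_const[OF less_imp_le[OF R]]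
    by (simp add: Henstock_Kurzweil_Integration.integral_diff integrable[OF Gh] integrable[OF G])
  also have "\<dots> \<le> 2 * B * (2 * R) ^ (DIM('a) - 1) + \<epsilon>"
    using integral_cube_translate_diff_le[OF i G bound h] h R
    by (simp add: e_def pos_divide_le_eq mult_ac)
  finally show "integral (cube R) g \<le> 2 * B * (2 * R) ^ (DIM('a) - 1) + \<epsilon>" .
qed

lemma integral_cube_divergence_le:
  fixes F :: "'a::euclidean_space \<Rightarrow> 'a"
  assumes F: "C1 F F'" and R: "R > 0" and bound: "\<And>x. norm (F x) \<le> B"
  shows "integral (cube R) (divergence F) \<le> 2 * real DIM('a) * B * (2 * R) ^ (DIM('a) - 1)"
proof -
  have partial: "integral (cube R) (\<lambda>x. F' x i \<bullet> i) \<le> 2 * B * (2 * R) ^ (DIM('a) - 1)"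
    if i: "i \<in> Basis" for i
  proof (rule integral_cube_partial_derivative_le[OF i R])
    show "continuous_on UNIV (\<lambda>x. F x \<bullet> i)"
      by (intro continuous_intros C1_continuous[OF F])
    show "continuous_on UNIV (\<lambda>x. F' x i \<bullet> i)"
      by (intro continuous_intros C1_continuous_derivative[OF F])
    show "\<bar>F x \<bullet> i\<bar> \<le> B" for x
      using Basis_le_norm[OF i, of "F x"] bound[of x] by linarith
    show "((\<lambda>s. F (x + s *\<^sub>R i) \<bullet> i) has_real_derivative F' x i \<bullet> i) (at 0)" for x
    proof -
      have "((\<lambda>s. x + s *\<^sub>R i) has_derivative (\<lambda>s. s *\<^sub>R i)) (at 0)"
        by (auto intro!: derivative_eq_intros)
      then have "((\<lambda>s. F (x + s *\<^sub>R i)) has_derivative (\<lambda>s. F' x (s *\<^sub>R i))) (at 0)"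
        using has_derivative_compose C1_has_derivative[OF F, of x] by fastforce
      then have "((\<lambda>s. F (x + s *\<^sub>R i) \<bullet> i) has_derivative (\<lambda>s. F' x (s *\<^sub>R i) \<bullet> i)) (at 0)"
        by (rule bounded_linear.has_derivative[OF bounded_linear_inner_left])
      moreover have "(\<lambda>s. F' x (s *\<^sub>R i) \<bullet> i) = (*) (F' x i \<bullet> i)"
        using linear_cmul[OF has_derivative_linear[OF C1_has_derivative[OF F, of x]]]
        by (auto simp: fun_eq_iff)
      ultimately show ?thesis
        by (simp add: has_field_derivative_def)
    qed
  qed
  have "integral (cube R) (divergence F) = (\<Sum>i\<in>Basis. integral (cube R) (\<lambda>x. F' x i \<bullet> i))"
    unfolding divergence_C1[OF F, abs_def]
    by (rule integral_sum)
      (auto intro!: integrable_cbox_if_continuous_on_UNIV continuous_intros C1_continuous_derivative[OF F])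
  also have "\<dots> \<le> (\<Sum>i\<in>(Basis::'a set). 2 * B * (2 * R) ^ (DIM('a) - 1))"
    by (rule sum_mono) (rule partial)
  finally show ?thesis
    by simp
qed

text \<open>The flux through the cube of side \<open>2R\<close> grows like \<open>R\<^sup>n\<^sup>-\<^sup>1\<close>, its volume like \<open>R\<^sup>n\<close>.\<close>
lemma divergence_lower_bound_nonpos:
  fixes F :: "'a::euclidean_space \<Rightarrow> 'a"
  assumes F: "C1 F F'" and bound: "\<And>x. norm (F x) \<le> B" and lower: "\<And>x. \<epsilon> \<le> divergence F x"
  shows "\<epsilon> \<le> 0"
proof (rule ccontr)
  assume "\<not> \<epsilon> \<le> 0"
  then have \<epsilon>: "\<epsilon> > 0" by simp
  have "0 \<le> B"
    using bound[of 0] norm_ge_zero order_trans by blast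
  define R where "R = (real DIM('a) * B + 1) / \<epsilon>"
  have R: "R > 0"
    using \<epsilon> \<open>0 \<le> B\<close> by (simp add: R_def add_nonneg_pos)
  have "\<epsilon> * (2 * R) ^ DIM('a) = integral (cube R) (\<lambda>x::'a. \<epsilon>)"
    by (rule integral_cube_const[where 'a='a, OF less_imp_le[OF R], symmetric])
  also have "\<dots> \<le> integral (cube R) (divergence F)"
    by (intro integral_le integrable_cbox_if_continuous_on_UNIV continuous_on_divergence[OF F]
        continuous_intros lower)
  also have "\<dots> \<le> 2 * real DIM('a) * B * (2 * R) ^ (DIM('a) - 1)"
    by (rule integral_cube_divergence_le[OF F R bound])
  finally have "(\<epsilon> * R) * (2 * R) ^ (DIM('a) - 1) \<le> (real DIM('a) * B) * (2 * R) ^ (DIM('a) - 1)"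
    by (simp add: mult_power_DIM_minus_1[symmetric] mult_ac)
  then have "\<epsilon> * R \<le> real DIM('a) * B"
    using R by (simp add: mult_le_cancel_right)
  then show False
    using \<epsilon> R \<open>0 \<le> B\<close> by (simp add: R_def)
qed

section \<open>The field Du/W of a smooth graph\<close>

lemma smooth_fun_C1:
  assumes "smooth_fun u"
  shows "C1 u (\<lambda>x. frechet_derivative u (at x))"
proof -
  have "C_k 2 u"
    using assms unfolding smooth_fun_def by blast
  then show ?thesis
    by (intro C1_frechet_derivative) (auto simp: numeral_2_eq_2)
qed

lemma frechet_derivative_eq_grad:
  fixes u :: "'a::euclidean_space \<Rightarrow> real"
  assumes "u differentiable (at x)"
  shows "frechet_derivative u (at x) h = grad u x \<bullet> h"
proof -
  have "frechet_derivative u (at x) h = (\<Sum>j\<in>Basis. (h \<bullet> j) * frechet_derivative u (at x) j)"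
    using frechet_derivative_works assms has_derivative_linear linear_eq_sum_Basis by blast
  also have "\<dots> = grad u x \<bullet> h"
    unfolding grad_def inner_sum_left by (rule sum.cong) (auto simp: inner_commute)
  finally show ?thesis .
qed

lemma smooth_fun_grad_C1:
  assumes "smooth_fun u"
  obtains Du' where "C1 (grad u) Du'"
proof -
  have "C_k 2 u"
    using assms unfolding smooth_fun_def by blast
  then have partial: "C1 (\<lambda>x. frechet_derivative u (at x) i)
      (\<lambda>x. frechet_derivative (\<lambda>x. frechet_derivative u (at x) i) (at x))" if "i \<in> Basis" for i
    using that by (intro C1_frechet_derivative) (auto simp: numeral_2_eq_2)
  have "C1 (\<lambda>x. \<Sum>i\<in>Basis. frechet_derivative u (at x) i *\<^sub>R i)
      (\<lambda>x h. \<Sum>i\<in>Basis. frechet_derivative (\<lambda>x. frechet_derivative u (at x) i) (at x) h *\<^sub>R i)"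
    by (rule C1_sum[OF finite_Basis]) (rule C1_scaleR_const[OF partial])
  moreover have "grad u = (\<lambda>x. \<Sum>i\<in>Basis. frechet_derivative u (at x) i *\<^sub>R i)"
    by (simp add: grad_def fun_eq_iff)
  ultimately show ?thesis
    using that by simp
qed

definition area_element :: "('a::euclidean_space \<Rightarrow> real) \<Rightarrow> 'a \<Rightarrow> real" where
  "area_element u x = sqrt (1 + (norm (grad u x))\<^sup>2)"

definition mean_curvature_field :: "('a::euclidean_space \<Rightarrow> real) \<Rightarrow> 'a \<Rightarrow> 'a" where
  "mean_curvature_field u x = (1 / area_element u x) *\<^sub>R grad u x"

lemma area_element_ge_1: "area_element u x \<ge> 1"
  by (simp add: area_element_def)

lemma area_element_squared: "area_element u x * area_element u x = 1 + (norm (grad u x))\<^sup>2"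
  by (simp add: area_element_def)

lemma mean_curv_eq_neg_divergence: "mean_curv u x = - divergence (mean_curvature_field u) x"
  unfolding mean_curv_def mean_curvature_field_def[abs_def] area_element_def ..

lemma norm_mean_curvature_field_le: "norm (mean_curvature_field u x) \<le> 1"
proof -
  have "norm (grad u x) \<le> area_element u x"
    unfolding area_element_def by (rule real_le_rsqrt) simp
  then show ?thesis
    using area_element_ge_1[of u x] by (simp add: mean_curvature_field_def divide_le_eq_1)
qed

lemma grad_inner_mean_curvature_field:
  "grad u x \<bullet> mean_curvature_field u x = (norm (grad u x))\<^sup>2 / area_element u x"
  by (simp add: mean_curvature_field_def power2_norm_eq_inner)

lemma area_element_le: "area_element u x \<le> 1 + grad u x \<bullet> mean_curvature_field u x"
proof -
  let ?W = "area_element u x"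
  have "(?W - 1) * ?W \<le> (norm (grad u x))\<^sup>2"
    using area_element_squared[of u x] area_element_ge_1[of u x] by (simp add: algebra_simps)
  then have "?W - 1 \<le> (norm (grad u x))\<^sup>2 / ?W"
    using area_element_ge_1[of u x] by (simp add: pos_le_divide_eq)
  then show ?thesis
    by (simp add: grad_inner_mean_curvature_field)
qed

lemma mean_curvature_field_C1:
  assumes "smooth_fun u"
  obtains X' where "C1 (mean_curvature_field u) X'"
proof -
  obtain Du' where Du: "C1 (grad u) Du'"
    using smooth_fun_grad_C1[OF assms] .
  have "C1 (\<lambda>x. (norm (grad u x))\<^sup>2) (\<lambda>x h. grad u x \<bullet> Du' x h + Du' x h \<bullet> grad u x)"
    using C1_inner[OF Du Du] by (simp add: power2_norm_eq_inner)
  then have "C1 (\<lambda>x. 1 / sqrt (1 + (norm (grad u x))\<^sup>2))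
      (\<lambda>x h. - (1 / (2 * sqrt (1 + (norm (grad u x))\<^sup>2) * (1 + (norm (grad u x))\<^sup>2)))
             * (grad u x \<bullet> Du' x h + Du' x h \<bullet> grad u x))"
  proof (rule C1_compose_real)
    fix x
    let ?t = "(norm (grad u x))\<^sup>2"
    have "0 < 1 + ?t"
      by (simp add: add_pos_nonneg)
    then show "((\<lambda>t. 1 / sqrt (1 + t)) has_real_derivative - (1 / (2 * sqrt (1 + ?t) * (1 + ?t)))) (at ?t)"
      by (auto intro!: derivative_eq_intros simp: field_simps)
  next
    show "continuous_on UNIV (\<lambda>x. - (1 / (2 * sqrt (1 + (norm (grad u x))\<^sup>2) * (1 + (norm (grad u x))\<^sup>2))))"
      by (intro continuous_intros C1_continuous[OF Du]) (auto simp: add_nonneg_eq_0_iff)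
  qed
  from C1_scaleR[OF this Du] show ?thesis
    using that unfolding mean_curvature_field_def area_element_def by blast
qed

section \<open>Volume growth\<close>

lemma graph_vol_ball_le_integral:
  fixes u f :: "'a::euclidean_space \<Rightarrow> real"
  assumes f: "continuous_on UNIV f" "\<And>x. 0 \<le> f x"
    and dominates: "\<And>x. norm (x, u x) < R \<Longrightarrow> area_element u x \<le> f x"
  shows "graph_vol u (ball 0 R) \<le> ennreal (integral (cube R) f)"
proof -
  have "indicator {x. (x, u x) \<in> ball 0 R} x * ennreal (area_element u x)
      \<le> ennreal (indicator (cube R) x * f x)" for x
  proof (cases "norm (x, u x) < R")
    case True
    then have "norm x < R"
      using norm_fst_le[of x "u x"] by simp
    then have "x \<in> cube R"
      by (auto simp: mem_box abs_le_iff dest!: Basis_le_norm[of _ x])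
    then show ?thesis
      using True dominates by (simp add: ennreal_leI)
  qed simp
  then have "graph_vol u (ball 0 R) \<le> (\<integral>\<^sup>+ x. ennreal (indicator (cube R) x * f x) \<partial>lborel)"
    unfolding graph_vol_def area_element_def[symmetric] by (rule nn_integral_mono)
  also have "\<dots> = ennreal (integral (cube R) f)"
    by (rule nn_integral_has_integral_lebesgue[OF f(2)
          integrable_integral[OF integrable_cbox_if_continuous_on_UNIV[OF f(1)]]])
  finally show ?thesis .
qed

lemma C1_arctan_compose:
  fixes u :: "'a::real_normed_vector \<Rightarrow> real"
  assumes "C1 u u'" and "R > 0"
  shows "C1 (\<lambda>x. R * (arctan (u x / R) + pi / 2)) (\<lambda>x h. inverse (1 + (u x / R)\<^sup>2) * u' x h)"
proof (rule C1_compose_real[OF assms(1)])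
  show "((\<lambda>t. R * (arctan (t / R) + pi / 2)) has_real_derivative inverse (1 + (u x / R)\<^sup>2)) (at (u x))"
    for x
    using assms(2) by (rule_tac derivative_eq_intros refl | simp)+
  show "continuous_on UNIV (\<lambda>x. inverse (1 + (u x / R)\<^sup>2))"
    by (intro continuous_intros C1_continuous[OF assms(1)])
      (use assms(2) in \<open>auto simp: add_nonneg_eq_0_iff\<close>)
qed

text \<open>The field \<open>\<psi>(u) X\<close> with the cutoff \<open>\<psi>(t) = R (arctan (t/R) + \<pi>/2) \<in> [0, \<pi>R]\<close>, whose
  derivative is at least \<open>1/2\<close> on \<open>[-R, R]\<close>.\<close>
lemma arctan_cutoff_field:
  fixes u :: "'a::euclidean_space \<Rightarrow> real"
  assumes u: "smooth_fun u" and H: "\<And>x. mean_curv u x \<le> 0" and R: "R > 0"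
  obtains F F' where "C1 F F'" "\<And>x. norm (F x) \<le> pi * R" "\<And>x. 0 \<le> divergence F x"
    "\<And>x. norm (x, u x) < R \<Longrightarrow> area_element u x \<le> 1 + 2 * divergence F x"
proof -
  let ?X = "mean_curvature_field u"
  obtain X' where X: "C1 ?X X'"
    using mean_curvature_field_C1[OF u] .
  define \<psi> where "\<psi> x = R * (arctan (u x / R) + pi / 2)" for x
  define \<psi>' where "\<psi>' x h = inverse (1 + (u x / R)\<^sup>2) * frechet_derivative u (at x) h" for x h
  have \<psi>: "C1 \<psi> \<psi>'"
    unfolding \<psi>_def[abs_def] \<psi>'_def[abs_def] by (rule C1_arctan_compose[OF smooth_fun_C1[OF u] R])
  have \<psi>_bounds: "0 \<le> \<psi> x" "\<psi> x \<le> pi * R" for x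
    using arctan_lbound[of "u x / R"] arctan_ubound[of "u x / R"] R
    by (auto simp: \<psi>_def mult.commute[of pi])
  have \<psi>'_X: "\<psi>' x (?X x) = inverse (1 + (u x / R)\<^sup>2) * (grad u x \<bullet> ?X x)" for x
    using frechet_derivative_eq_grad[OF differentiableI[OF C1_has_derivative[OF smooth_fun_C1[OF u]]]]
    by (simp add: \<psi>'_def)
  have Du_X: "0 \<le> grad u x \<bullet> ?X x" for x
    using area_element_ge_1[of u x] by (simp add: grad_inner_mean_curvature_field)
  have \<psi>_div_X: "0 \<le> \<psi> x * divergence ?X x" for x
    using H[of x] \<psi>_bounds(1)[of x] by (simp add: mean_curv_eq_neg_divergence)
  show ?thesis
  proof (rule that[OF C1_scaleR[OF \<psi> X]])
    show "norm (\<psi> x *\<^sub>R ?X x) \<le> pi * R" for x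
      using mult_mono[OF \<psi>_bounds(2) norm_mean_curvature_field_le] \<psi>_bounds(1)[of x] R by simp
    show "0 \<le> divergence (\<lambda>x. \<psi> x *\<^sub>R ?X x) x" for x
      using Du_X[of x] \<psi>_div_X[of x] by (simp add: divergence_scaleR[OF \<psi> X] \<psi>'_X)
    show "area_element u x \<le> 1 + 2 * divergence (\<lambda>x. \<psi> x *\<^sub>R ?X x) x" if "norm (x, u x) < R" for x
    proof -
      have "\<bar>u x / R\<bar> < 1"
        using norm_snd_le[of "u x" x] that R by simp
      then have "1 + (u x / R)\<^sup>2 \<le> 2"
        by (simp add: abs_square_less_1 less_imp_le)
      then have "inverse 2 \<le> inverse (1 + (u x / R)\<^sup>2)"
        by (rule le_imp_inverse_le) (simp add: add_pos_nonneg)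
      then have "grad u x \<bullet> ?X x \<le> 2 * \<psi>' x (?X x)"
        using mult_right_mono[OF _ Du_X[of x]] unfolding \<psi>'_X by fastforce
      then show ?thesis
        using area_element_le[of u x] \<psi>_div_X[of x]
        unfolding divergence_scaleR[OF \<psi> X] distrib_left by linarith
    qed
  qed
qed

lemma graph_vol_ball_le:
  fixes u :: "'a::euclidean_space \<Rightarrow> real"
  assumes u: "smooth_fun u" and H: "\<And>x. mean_curv u x \<le> 0" and R: "R > 0"
  shows "graph_vol u (ball 0 R) \<le> ennreal ((1 + 2 * real DIM('a) * pi) * (2 * R) ^ DIM('a))"
proof -
  obtain F F' where F: "C1 F F'" "\<And>x. norm (F x) \<le> pi * R" "\<And>x. 0 \<le> divergence F x"
    and area: "\<And>x. norm (x, u x) < R \<Longrightarrow> area_element u x \<le> 1 + 2 * divergence F x"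
    using arctan_cutoff_field[OF u H R] by blast
  have "graph_vol u (ball 0 R) \<le> ennreal (integral (cube R) (\<lambda>x. 1 + 2 * divergence F x))"
    using F(3) area
    by (intro graph_vol_ball_le_integral continuous_intros continuous_on_divergence[OF F(1)])
      (auto intro: add_nonneg_nonneg)
  also have "integral (cube R) (\<lambda>x. 1 + 2 * divergence F x)
      = integral (cube R) (\<lambda>x::'a. 1) + integral (cube R) (\<lambda>x. 2 * divergence F x)"
    by (rule Henstock_Kurzweil_Integration.integral_add)
      (auto intro!: integrable_cbox_if_continuous_on_UNIV continuous_intros continuous_on_divergence[OF F(1)])
  also have "\<dots> = (2 * R) ^ DIM('a) + 2 * integral (cube R) (divergence F)"
    using R by (simp only: integral_cube_const integral_mult_right mult_1 less_imp_le)
  also have "\<dots> \<le> (2 * R) ^ DIM('a) + 2 * (2 * real DIM('a) * (pi * R) * (2 * R) ^ (DIM('a) - 1))"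
    using integral_cube_divergence_le[OF F(1) R F(2)] by (simp add: mult_ac)
  also have "\<dots> = (1 + 2 * real DIM('a) * pi) * (2 * R) ^ DIM('a)"
    by (simp add: mult_power_DIM_minus_1[symmetric] algebra_simps)
  finally show ?thesis
    by (simp add: ennreal_leI)
qed

section \<open>Translating solitons\<close>

text \<open>With \<open>\<psi> = sgn c \<cdot> S + K + 1\<close> the bounded field \<open>\<psi> X\<close> has divergence
  \<open>|c| w + (sgn c + \<psi>) div X \<ge> |c|\<close>.\<close>
lemma bounded_potential_coefficient_eq_0:
  fixes X :: "'a::euclidean_space \<Rightarrow> 'a" and S :: "'a \<Rightarrow> real"
  assumes X: "C1 X X'" "\<And>x. norm (X x) \<le> 1" "\<And>x. 0 \<le> divergence X x"
    and S: "C1 S S'" "\<And>x. \<bar>S x\<bar> \<le> K"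
    and w: "\<And>x. 1 \<le> w x"
    and DS_X: "\<And>x. S' x (X x) = divergence X x + c * w x"
  shows "c = 0"
proof -
  define \<psi> where "\<psi> x = S x * sgn c + (K + 1)" for x
  have \<psi>: "C1 \<psi> (\<lambda>x h. S' x h * sgn c)"
    using C1_add[OF C1_scaleR_const[OF S(1), of "sgn c"] C1_const[of "K + 1"]]
    unfolding \<psi>_def[abs_def] by simp
  have \<psi>_bounds: "0 \<le> sgn c + \<psi> x" "0 \<le> \<psi> x" "\<psi> x \<le> 2 * K + 1" for x
    using S(2)[of x] by (auto simp: \<psi>_def sgn_if)
  have "\<bar>c\<bar> \<le> 0"
  proof (rule divergence_lower_bound_nonpos[OF C1_scaleR[OF \<psi> X(1)]])
    show "norm (\<psi> x *\<^sub>R X x) \<le> 2 * K + 1" for x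
      using mult_mono[OF \<psi>_bounds(3)[of x] X(2)[of x]] \<psi>_bounds(2,3)[of x] by simp
    show "\<bar>c\<bar> \<le> divergence (\<lambda>x. \<psi> x *\<^sub>R X x) x" for x
    proof -
      have "0 \<le> divergence X x * sgn c + \<psi> x * divergence X x"
        using mult_nonneg_nonneg[OF \<psi>_bounds(1) X(3)] by (simp add: algebra_simps)
      moreover have "\<bar>c\<bar> \<le> \<bar>c\<bar> * w x"
        using mult_left_mono[OF w[of x], of "\<bar>c\<bar>"] by simp
      moreover have "c * w x * sgn c = \<bar>c\<bar> * w x"
        by (simp add: sgn_if)
      ultimately show ?thesis
        unfolding divergence_scaleR[OF \<psi> X(1)] DS_X distrib_right by linarith
    qed
  qed
  then show ?thesis
    by simp
qed

lemma graph_normal_inner: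
  "graph_normal u x \<bullet> (b, c) = (c - grad u x \<bullet> b) / area_element u x"
  by (simp add: graph_normal_def area_element_def inner_Pair diff_divide_distrib)

lemma translator_inner_mean_curvature_field:
  assumes "mean_curv u x = graph_normal u x \<bullet> (b, c)"
  shows "mean_curvature_field u x \<bullet> b + (grad u x \<bullet> mean_curvature_field u x) * c
    = divergence (mean_curvature_field u) x + c * area_element u x"
proof -
  let ?W = "area_element u x"
  have "divergence (mean_curvature_field u) x = (grad u x \<bullet> b - c) / ?W"
    using assms area_element_ge_1[of u x]
    by (simp add: mean_curv_eq_neg_divergence graph_normal_inner field_simps)
  moreover have "c * ?W = c / ?W + ((norm (grad u x))\<^sup>2 / ?W) * c"
    using area_element_squared[of u x] area_element_ge_1[of u x] by (simp add: field_simps)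
  ultimately show ?thesis
    by (simp add: grad_inner_mean_curvature_field mean_curvature_field_def diff_divide_distrib
        power2_norm_eq_inner)
qed

lemma translator_height_unbounded:
  fixes u :: "'a::euclidean_space \<Rightarrow> real" and a :: "'a \<times> real"
  assumes u: "smooth_fun u" and H: "\<And>x. mean_curv u x \<le> 0" and a: "norm a = 1"
    and translator: "\<And>x. mean_curv u x = graph_normal u x \<bullet> a"
  shows "\<not> (\<exists>K. \<forall>x. \<bar>(x, u x) \<bullet> a\<bar> \<le> K)"
proof
  assume "\<exists>K. \<forall>x. \<bar>(x, u x) \<bullet> a\<bar> \<le> K"
  then obtain K where K: "\<And>x. \<bar>(x, u x) \<bullet> a\<bar> \<le> K"
    by blast
  obtain b c where a_eq: "a = (b, c)"
    by (cases a)
  obtain X' where X: "C1 (mean_curvature_field u) X'"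
    using mean_curvature_field_C1[OF u] .
  define S' where "S' x h = h \<bullet> b + frechet_derivative u (at x) h * c" for x h
  have S: "C1 (\<lambda>x. (x, u x) \<bullet> a) S'"
    using C1_add[OF C1_inner_const C1_scaleR_const[OF smooth_fun_C1[OF u]]]
    unfolding S'_def[abs_def] by (simp add: a_eq inner_Pair)
  have "c = 0"
  proof (rule bounded_potential_coefficient_eq_0[OF X norm_mean_curvature_field_le _ S K
        area_element_ge_1])
    show "0 \<le> divergence (mean_curvature_field u) x" for x
      using H[of x] by (simp add: mean_curv_eq_neg_divergence)
    show "S' x (mean_curvature_field u x) = divergence (mean_curvature_field u) x + c * area_element u x"
      for x
      using translator_inner_mean_curvature_field[OF translator[of x, unfolded a_eq]]
        frechet_derivative_eq_grad[OF differentiableI[OF C1_has_derivative[OF smooth_fun_C1[OF u]]]]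
      by (simp add: S'_def)
  qed
  then have "b \<bullet> b = 1"
    using a by (simp add: a_eq norm_Pair power2_norm_eq_inner[symmetric])
  then show False
    using K[of "(\<bar>K\<bar> + 1) *\<^sub>R b"] \<open>c = 0\<close> by (simp add: a_eq)
qed

theorem theorem5:
  fixes u :: "'a::euclidean_space \<Rightarrow> real"
  assumes smooth: "smooth_fun u"
    and H_nonpos: "\<forall>x. mean_curv u x \<le> 0"
  shows "(\<exists>C>0. \<forall>R>0. graph_vol u (ball 0 R) \<le> ennreal (C * R ^ DIM('a)))
       \<and> (\<forall>a :: 'a \<times> real. norm a = 1 \<longrightarrow>
            (\<forall>x. mean_curv u x = graph_normal u x \<bullet> a) \<longrightarrow>
            (\<not> bdd_below ((\<lambda>X. X \<bullet> a) ` graph u) \<or> \<not> bdd_above ((\<lambda>X. X \<bullet> a) ` graph u)))"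
proof (intro conjI allI impI)
  let ?C = "2 ^ DIM('a) * (1 + 2 * real DIM('a) * pi)"
  have "\<forall>R>0. graph_vol u (ball 0 R) \<le> ennreal (?C * R ^ DIM('a))"
    using graph_vol_ball_le[OF smooth] H_nonpos by (simp add: power_mult_distrib mult_ac)
  moreover have "?C > 0"
    by (simp add: add_pos_nonneg)
  ultimately show "\<exists>C>0. \<forall>R>0. graph_vol u (ball 0 R) \<le> ennreal (C * R ^ DIM('a))"
    by blast
next
  fix a :: "'a \<times> real"
  assume "norm a = 1" and "\<forall>x. mean_curv u x = graph_normal u x \<bullet> a"
  then have unbounded: "\<not> (\<exists>K. \<forall>x. \<bar>(x, u x) \<bullet> a\<bar> \<le> K)"
    using translator_height_unbounded[OF smooth] H_nonpos by blast
  show "\<not> bdd_below ((\<lambda>X. X \<bullet> a) ` graph u) \<or> \<not> bdd_above ((\<lambda>X. X \<bullet> a) ` graph u)"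
  proof (rule ccontr)
    assume "\<not> ?thesis"
    then obtain m M where bounds: "\<And>X. X \<in> graph u \<Longrightarrow> m \<le> X \<bullet> a \<and> X \<bullet> a \<le> M"
      unfolding bdd_below_def bdd_above_def by blast
    have "\<bar>(x, u x) \<bullet> a\<bar> \<le> max \<bar>m\<bar> \<bar>M\<bar>" for x
      using bounds[of "(x, u x)"] unfolding graph_def by auto
    with unbounded show False
      by blast
  qed
qed

end
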